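(* Let $d\ge2$, $k\in\mathbb N$, $p\in[0,1]$, and let $\{X_e:e\in\mathcal E^d\}$ be Bernoulli$(p)$ random variables (identically distributed marginally, with joint law $\mathbb P_p$) such that each $X_e$ is independent of $\{X_{\tilde e}:|v_e-v_{\tilde e}|_\infty\ge k\}$. Let $N_n=\max_{\gamma\in\Xi_n}\sum_{e\in\gamma}X_e$. There exist constants $C_1,C_2,C_3,C_4>0$ depending only on $d$ and $k$ such that: (i) for all $p\in[0,1]$ and all $n\in\mathbb N$, $\mathbb E_pN_n\le C_1p^{1/d}n$; (ii) for each $p\in(0,1]$, $\mathbb E_p\big[\sup_{n\ge\lceil p^{-2/d}\rceil}\frac{N_n}{n}\big]\le C_1p^{1/d}$; (iii) for each $p\in(0,1)$ and all $s>C_2$, $\mathbb P_p\big(\sup_{n\ge\lceil p^{-2/d}\rceil}\frac{N_n}{n}>sp^{1/d}\big)\le C_3e^{-C_4s}$.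
   Context: $\mathcal E^d$ is the set of nearest-neighbor edges of $\mathbb Z^d$. For $e=\{a,b\}$, $v_e$ is the endpoint of $e$ with smaller $\ell^1$ norm. $\Xi_n$ is the set of all vertex self-avoiding nearest-neighbor paths starting at $0$ with $n$ edges. *)

theory Defs
  imports "HOL-Probability.Probability"
begin

text \<open>Vertices of Z^d are functions 'd => int for a finite index type 'd, d = CARD('d).
  Edges are two-element vertex sets.\<close>

type_synonym 'd vertex = "'d \<Rightarrow> int"
type_synonym 'd edge = "'d vertex set"

definition l1norm :: "('d::finite) vertex \<Rightarrow> int" where
  "l1norm a = (\<Sum>i\<in>UNIV. \<bar>a i\<bar>)"

definition linfnorm :: "('d::finite) vertex \<Rightarrow> int" where
  "linfnorm a = Max ((\<lambda>i. \<bar>a i\<bar>) ` UNIV)"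

definition nn_edges :: "('d::finite) edge set" where
  "nn_edges = {{a, b} | a b. l1norm (\<lambda>i. a i - b i) = 1}"

definition vtx :: "('d::finite) edge \<Rightarrow> 'd vertex" where
  "vtx e = (THE a. a \<in> e \<and> (\<forall>b\<in>e. l1norm a \<le> l1norm b))"

definition SAW :: "nat \<Rightarrow> ('d::finite) vertex list set" where
  "SAW n = {\<gamma>. length \<gamma> = n + 1 \<and> distinct \<gamma> \<and> \<gamma> ! 0 = (\<lambda>_. 0) \<and>
                 (\<forall>i<n. l1norm (\<lambda>j. (\<gamma> ! i) j - (\<gamma> ! Suc i) j) = 1)}"

definition path_edges :: "('d::finite) vertex list \<Rightarrow> 'd edge set" where
  "path_edges \<gamma> = {{\<gamma> ! i, \<gamma> ! Suc i} | i. Suc i < length \<gamma>}"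

definition Nmax :: "(('d::finite) edge \<Rightarrow> 'w \<Rightarrow> bool) \<Rightarrow> nat \<Rightarrow> 'w \<Rightarrow> real" where
  "Nmax X n \<omega> = Max ((\<lambda>\<gamma>. \<Sum>e\<in>path_edges \<gamma>. of_bool (X e \<omega>)) ` (SAW n :: 'd vertex list set))"

definition far_edges :: "nat \<Rightarrow> ('d::finite) edge \<Rightarrow> 'd edge set" where
  "far_edges k e = {e' \<in> nn_edges. linfnorm (\<lambda>j. vtx e j - vtx e' j) \<ge> int k}"

end

theory Submission
  imports Defs
begin

text \<open>
  If \<open>N\<^sub>n > c j\<close> with \<open>c = near_bound k d\<close>, a maximising path carries more than \<open>c j\<close>
  open edges, and a greedy choice extracts \<open>j + 1\<close> of them that are pairwise \<open>k\<close>-far apart;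
  these are open simultaneously with probability \<open>p ^ (j + 1)\<close>. Such an edge set is encoded
  by the walk through the first endpoints of its edges, of total \<open>\<ell>\<^sup>1\<close> length at most
  \<open>n\<close>, together with the edge directions, and weighting every step of length \<open>l\<close> by
  \<open>x ^ l\<close> shows that there are at most \<open>x ^ (- n) (6 / (1 - x)) ^ (d (j + 1))\<close> codes, for
  every \<open>0 < x < 1\<close>. With \<open>x = 1 / (1 + \<eta>)\<close> the union bound gives
  \<open>P(N\<^sub>n > c j) \<le> e ^ (\<eta> n) ((12 / \<eta>) ^ d p) ^ (j + 1)\<close>. Choosing
  \<open>\<eta> = 12 e\<^sup>2 p ^ (1 / d)\<close>, or \<open>\<eta> = 1 / n\<close> when \<open>n p ^ (1 / d)\<close> is small, the
  tail of \<open>N\<^sub>n\<close> decays exponentially beyond a constant multiple of \<open>p ^ (1 / d) n\<close>.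
  Summing the tails gives (i); a union bound over \<open>n \<ge> p ^ (- 2 / d)\<close> controls the
  supremum of \<open>N\<^sub>n / n\<close>, which gives (iii) and then (ii).
\<close>

section \<open>Lattice geometry and weighted walk counts\<close>

definition l1dist :: "('d::finite) vertex \<Rightarrow> 'd vertex \<Rightarrow> nat" where
  "l1dist a b = nat (l1norm (\<lambda>i. a i - b i))"

definition cube :: "nat \<Rightarrow> ('d::finite) vertex set" where
  "cube r = {v. \<forall>i. \<bar>v i\<bar> \<le> int r}"

lemma l1norm_nonneg: "l1norm a \<ge> 0"
  unfolding l1norm_def by (simp add: sum_nonneg)

lemma abs_le_l1norm: "\<bar>a i\<bar> \<le> l1norm a"
  unfolding l1norm_def by (rule member_le_sum) auto

lemma l1norm_diff_commute: "l1norm (\<lambda>i. a i - b i) = l1norm (\<lambda>i. b i - a i)"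
  unfolding l1norm_def by (simp add: abs_minus_commute)

lemma l1norm_diff_triangle:
  "l1norm (\<lambda>i. a i - c i) \<le> l1norm (\<lambda>i. a i - b i) + l1norm (\<lambda>i. b i - c i)"
  unfolding l1norm_def sum.distrib[symmetric] by (rule sum_mono) linarith

lemma l1dist_triangle: "l1dist a c \<le> l1dist a b + l1dist b c"
  unfolding l1dist_def using l1norm_diff_triangle[of a c b] l1norm_nonneg
  by (simp add: nat_add_distrib[symmetric] nat_mono)

lemma nat_l1norm: "nat (l1norm a) = (\<Sum>i\<in>UNIV. nat \<bar>a i\<bar>)"
proof -
  have "l1norm a = int (\<Sum>i\<in>UNIV. nat \<bar>a i\<bar>)"
    unfolding l1norm_def of_nat_sum by simp
  then show ?thesis by (metis nat_int)
qed

lemma card_ge_1: "CARD('d::finite) \<ge> 1"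
  using finite_UNIV_card_ge_0[where 'a='d] by simp

lemma cube_eq_PiE: "cube r = PiE UNIV (\<lambda>_. {-int r..int r})"
  unfolding cube_def PiE_UNIV_domain Pi_def by (fastforce simp: abs_le_iff minus_le_iff)

lemma finite_cube: "finite (cube r)"
  unfolding cube_eq_PiE by (rule finite_PiE) auto

lemma card_cube: "card (cube r :: ('d::finite) vertex set) = (2 * r + 1) ^ CARD('d)"
  unfolding cube_eq_PiE by (simp add: card_PiE nat_add_distrib nat_mult_distrib)

lemma l1dist_le_imp_diff_in_cube: "l1dist v w \<le> R \<Longrightarrow> (\<lambda>i. v i - w i) \<in> cube R"
  unfolding l1dist_def cube_def
  using abs_le_l1norm[of "\<lambda>i. v i - w i"] by (auto simp: nat_le_iff intro: order_trans)

lemma l1ball_subset_cube: "{v. l1dist v w \<le> R} \<subseteq> (\<lambda>a i. a i + w i) ` cube R"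
proof
  fix v assume "v \<in> {v. l1dist v w \<le> R}"
  then have "(\<lambda>i. v i - w i) \<in> cube R" by (simp add: l1dist_le_imp_diff_in_cube)
  then show "v \<in> (\<lambda>a i. a i + w i) ` cube R" by (rule rev_image_eqI) auto
qed

lemma finite_l1ball: "finite {v. l1dist v w \<le> R}"
  by (rule finite_subset[OF l1ball_subset_cube]) (simp add: finite_cube)

lemma geometric_sum_le:
  fixes x :: real assumes "0 \<le> x" "x < 1"
  shows "(\<Sum>m\<le>R. x ^ m) \<le> 1 / (1 - x)"
proof -
  have "(\<Sum>m\<le>R. x ^ m) = (1 - x ^ Suc R) / (1 - x)"
    using assms by (simp only: lessThan_Suc_atMost[symmetric] sum_gp_strict) simp
  also have "\<dots> \<le> 1 / (1 - x)" using assms by (intro divide_right_mono) auto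
  finally show ?thesis .
qed

lemma sum_power_abs_le:
  fixes x :: real assumes "0 \<le> x" "x < 1"
  shows "(\<Sum>a\<in>{-int R..int R}. x ^ nat \<bar>a\<bar>) \<le> 2 / (1 - x)"
proof -
  let ?g = "\<lambda>a::int. x ^ nat \<bar>a\<bar>"
  have half: "sum ?g {0..int R} = (\<Sum>m\<le>R. x ^ m)"
    by (rule sum.reindex_bij_witness[of _ int nat]) auto
  have mirror: "sum ?g {-int R..0} = sum ?g {0..int R}"
    by (rule sum.reindex_bij_witness[of _ uminus uminus]) auto
  have "{-int R..int R} = {-int R..0} \<union> {0..int R}" "{-int R..0} \<inter> {0..int R} = {0}"
    by auto
  then have "sum ?g {-int R..int R} = sum ?g {-int R..0} + sum ?g {0..int R} - sum ?g {0}"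
    by (metis sum_Un finite_atLeastAtMost_int)
  then have "sum ?g {-int R..int R} = 2 * (\<Sum>m\<le>R. x ^ m) - 1"
    unfolding mirror half by simp
  then show ?thesis using geometric_sum_le[OF assms, of R] by simp
qed

lemma sum_power_l1dist_le:
  fixes x :: real assumes "0 \<le> x" "x < 1"
  shows "(\<Sum>v | l1dist v w \<le> R. x ^ l1dist v (w::('d::finite) vertex)) \<le> (2 / (1 - x)) ^ CARD('d)"
proof -
  let ?shift = "\<lambda>a i. a i + w i"
  have "(\<Sum>v | l1dist v w \<le> R. x ^ l1dist v w) \<le> (\<Sum>v\<in>?shift ` cube R. x ^ l1dist v w)"
    using assms by (intro sum_mono2 l1ball_subset_cube finite_imageI finite_cube) auto
  also have "\<dots> = (\<Sum>a\<in>(cube R :: 'd vertex set). x ^ nat (l1norm a))"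
    by (subst sum.reindex) (auto intro!: inj_onI sum.cong simp: fun_eq_iff l1dist_def)
  also have "\<dots> = (\<Sum>a\<in>PiE (UNIV :: 'd set) (\<lambda>_. {-int R..int R}). \<Prod>i\<in>UNIV. x ^ nat \<bar>a i\<bar>)"
    unfolding cube_eq_PiE nat_l1norm power_sum by simp
  also have "\<dots> = (\<Prod>i\<in>(UNIV :: 'd set). \<Sum>a\<in>{-int R..int R}. x ^ nat \<bar>a\<bar>)"
    by (rule prod_sum_PiE[symmetric]) auto
  also have "\<dots> = (\<Sum>a\<in>{-int R..int R}. x ^ nat \<bar>a\<bar>) ^ CARD('d)"
    by simp
  also have "\<dots> \<le> (2 / (1 - x)) ^ CARD('d)"
    using assms by (intro power_mono sum_power_abs_le sum_nonneg) auto
  finally show ?thesis .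
qed

fun walk_length :: "('d::finite) vertex \<Rightarrow> 'd vertex list \<Rightarrow> nat" where
  "walk_length v [] = 0"
| "walk_length v (w # ws) = l1dist w v + walk_length w ws"

definition short_walks :: "('d::finite) vertex \<Rightarrow> nat \<Rightarrow> nat \<Rightarrow> 'd vertex list set" where
  "short_walks v j R = {ws. length ws = j \<and> walk_length v ws \<le> R}"

lemma short_walks_0: "short_walks v 0 R = {[]}"
  unfolding short_walks_def by auto

lemma short_walks_Suc:
  "short_walks v (Suc j) R =
     (\<lambda>(w, ws). w # ws) ` (SIGMA w:{w. l1dist w v \<le> R}. short_walks w j (R - l1dist w v))"
proof (rule set_eqI)
  fix ws
  show "ws \<in> short_walks v (Suc j) R \<longleftrightarrow>
    ws \<in> (\<lambda>(w, ws). w # ws) ` (SIGMA w:{w. l1dist w v \<le> R}. short_walks w j (R - l1dist w v))"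
    unfolding short_walks_def by (cases ws) (auto simp: image_iff)
qed

lemma finite_short_walks: "finite (short_walks v j R)"
proof (induction j arbitrary: v R)
  case 0
  then show ?case by (simp add: short_walks_0)
next
  case (Suc j)
  then show ?case unfolding short_walks_Suc by (intro finite_imageI finite_SigmaI finite_l1ball)
qed

text \<open>The weights \<open>x ^ l1dist\<close> of a single step sum to at most \<open>(2 / (1 - x)) ^ d\<close> over the
  whole lattice, so weighting a walk by \<open>x ^ walk_length\<close> bounds the number of short walks.\<close>

lemma card_short_walks_le:
  fixes x :: real assumes x: "0 < x" "x < 1"
  shows "real (card (short_walks (v::('d::finite) vertex) j R))
           \<le> (1 / x) ^ R * ((2 / (1 - x)) ^ CARD('d)) ^ j"
proof (induction j arbitrary: v R)
  case 0
  have "1 \<le> (1 / x) ^ R" using x by (intro one_le_power) simp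
  then show ?case by (simp add: short_walks_0)
next
  case (Suc j)
  let ?K = "(2 / (1 - x)) ^ CARD('d)"
  let ?B = "{w. l1dist w v \<le> R}"
  have "real (card (short_walks v (Suc j) R))
      \<le> real (card (SIGMA w:?B. short_walks w j (R - l1dist w v)))"
    unfolding short_walks_Suc
    by (intro of_nat_mono card_image_le finite_SigmaI finite_l1ball finite_short_walks)
  also have "\<dots> = (\<Sum>w\<in>?B. real (card (short_walks w j (R - l1dist w v))))"
    by (simp add: card_SigmaI finite_l1ball finite_short_walks)
  also have "\<dots> \<le> (\<Sum>w\<in>?B. (1 / x) ^ (R - l1dist w v) * ?K ^ j)"
    by (intro sum_mono Suc.IH)
  also have "\<dots> = (\<Sum>w\<in>?B. (1 / x) ^ R * ?K ^ j * x ^ l1dist w v)"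
  proof (rule sum.cong[OF refl])
    fix w assume "w \<in> ?B"
    then have "(1 / x) ^ R = (1 / x) ^ (R - l1dist w v) * (1 / x) ^ l1dist w v"
      by (simp flip: power_add)
    then show "(1 / x) ^ (R - l1dist w v) * ?K ^ j = (1 / x) ^ R * ?K ^ j * x ^ l1dist w v"
      using x by (simp add: power_one_over field_simps)
  qed
  also have "\<dots> = (1 / x) ^ R * ?K ^ j * (\<Sum>w\<in>?B. x ^ l1dist w v)"
    by (simp add: sum_distrib_left)
  also have "\<dots> \<le> (1 / x) ^ R * ?K ^ j * ?K"
    using x by (intro mult_left_mono sum_power_l1dist_le) auto
  finally show ?case by (simp add: algebra_simps)
qed

section \<open>Self-avoiding paths and codes for their edge sets\<close>

definition unit_vectors :: "('d::finite) vertex set" where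
  "unit_vectors = {u. l1norm u = 1}"

lemma unit_vectors_subset_cube: "unit_vectors \<subseteq> cube 1"
  unfolding unit_vectors_def cube_def by clarsimp (metis abs_le_l1norm)

lemma finite_unit_vectors: "finite unit_vectors"
  by (rule finite_subset[OF unit_vectors_subset_cube finite_cube])

lemma card_unit_vectors_le: "card (unit_vectors :: ('d::finite) vertex set) \<le> 3 ^ CARD('d)"
  using card_mono[OF finite_cube unit_vectors_subset_cube] by (simp add: card_cube)

definition step_edges :: "('d::finite) vertex list \<Rightarrow> 'd vertex list \<Rightarrow> 'd edge set" where
  "step_edges vs us = set (map (\<lambda>(v, u). {v, \<lambda>i. v i + u i}) (zip vs us))"

text \<open>A set of \<open>j\<close> edges of a self-avoiding path of length \<open>n\<close> is encoded by their first
  endpoints, in path order, together with the unit steps leaving them.\<close>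

definition edge_codes :: "nat \<Rightarrow> nat \<Rightarrow> (('d::finite) vertex list \<times> 'd vertex list) set" where
  "edge_codes n j = short_walks (\<lambda>_. 0) j n \<times> {us. set us \<subseteq> unit_vectors \<and> length us = j}"

lemma finite_edge_codes: "finite (edge_codes n j)"
  unfolding edge_codes_def
  by (intro finite_cartesian_product finite_short_walks finite_lists_length_eq finite_unit_vectors)

lemma card_edge_codes_le:
  fixes x :: real assumes x: "0 < x" "x < 1"
  shows "real (card (edge_codes n j :: (('d::finite) vertex list \<times> 'd vertex list) set))
           \<le> (1 / x) ^ n * ((6 / (1 - x)) ^ CARD('d)) ^ j"
proof -
  let ?U = "unit_vectors :: 'd vertex set"
  have "real (card {us. set us \<subseteq> ?U \<and> length us = j}) \<le> (3 ^ CARD('d)) ^ j"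
  proof -
    have "card ?U ^ j \<le> (3 ^ CARD('d)) ^ j" by (rule power_mono[OF card_unit_vectors_le]) simp
    then have "real (card ?U ^ j) \<le> real ((3 ^ CARD('d)) ^ j)" by (rule of_nat_mono)
    then show ?thesis unfolding card_lists_length_eq[OF finite_unit_vectors] by simp
  qed
  then have "real (card (edge_codes n j :: ('d vertex list \<times> 'd vertex list) set))
      \<le> (1 / x) ^ n * ((2 / (1 - x)) ^ CARD('d)) ^ j * (3 ^ CARD('d)) ^ j"
    unfolding edge_codes_def card_cartesian_product of_nat_mult
    using card_short_walks_le[OF x] x by (intro mult_mono) auto
  also have "\<dots> = (1 / x) ^ n * ((6 / (1 - x)) ^ CARD('d)) ^ j"
    by (simp only: mult.assoc power_mult_distrib[symmetric]) simp
  finally show ?thesis .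
qed

lemma SAW_length: "\<gamma> \<in> SAW n \<Longrightarrow> length \<gamma> = Suc n"
  unfolding SAW_def by simp

lemma SAW_nth_0: "\<gamma> \<in> SAW n \<Longrightarrow> \<gamma> ! 0 = (\<lambda>_. 0)"
  unfolding SAW_def by simp

lemma SAW_step: "\<gamma> \<in> SAW n \<Longrightarrow> i < n \<Longrightarrow> l1norm (\<lambda>j. (\<gamma> ! Suc i) j - (\<gamma> ! i) j) = 1"
  unfolding SAW_def by (auto simp: l1norm_diff_commute)

lemma SAW_l1dist_le:
  assumes "\<gamma> \<in> SAW n" "a \<le> i" "i \<le> n"
  shows "l1dist (\<gamma> ! i) (\<gamma> ! a) \<le> i - a"
  using assms(2,3)
proof (induction i)
  case 0
  then show ?case by (simp add: l1dist_def l1norm_def)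
next
  case (Suc i)
  show ?case
  proof (cases "a = Suc i")
    case True
    then show ?thesis by (simp add: l1dist_def l1norm_def)
  next
    case False
    then have "l1dist (\<gamma> ! i) (\<gamma> ! a) \<le> i - a" using Suc by simp
    moreover have "l1dist (\<gamma> ! Suc i) (\<gamma> ! i) = 1"
      using SAW_step[OF assms(1)] Suc.prems by (simp add: l1dist_def)
    ultimately show ?thesis
      using l1dist_triangle[of "\<gamma> ! Suc i" "\<gamma> ! a" "\<gamma> ! i"] False Suc.prems by simp
  qed
qed

lemma walk_length_SAW_le:
  assumes "\<gamma> \<in> SAW n" "sorted L" "\<forall>i\<in>set L. a \<le> i \<and> i \<le> n" "a \<le> n"
  shows "walk_length (\<gamma> ! a) (map ((!) \<gamma>) L) \<le> n - a"
  using assms(2-)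
proof (induction L arbitrary: a)
  case Nil
  then show ?case by simp
next
  case (Cons i L)
  have "l1dist (\<gamma> ! i) (\<gamma> ! a) \<le> i - a" using SAW_l1dist_le[OF assms(1)] Cons.prems by simp
  moreover have "walk_length (\<gamma> ! i) (map ((!) \<gamma>) L) \<le> n - i" using Cons by auto
  moreover have "a \<le> i" "i \<le> n" using Cons.prems by auto
  ultimately show ?case by simp
qed

lemma SAW_subset_cube: "\<gamma> \<in> SAW n \<Longrightarrow> set \<gamma> \<subseteq> cube n"
proof
  fix v assume \<gamma>: "\<gamma> \<in> SAW n" and "v \<in> set \<gamma>"
  then obtain i where "i \<le> n" "v = \<gamma> ! i"
    by (metis SAW_length in_set_conv_nth less_Suc_eq_le)
  then have "l1dist v (\<gamma> ! 0) \<le> n" using SAW_l1dist_le[OF \<gamma>, of 0 i] by simp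
  then show "v \<in> cube n"
    using l1dist_le_imp_diff_in_cube[of v "\<gamma> ! 0" n] SAW_nth_0[OF \<gamma>] by simp
qed

lemma finite_SAW: "finite (SAW n :: ('d::finite) vertex list set)"
proof (rule finite_subset)
  show "SAW n \<subseteq> {\<gamma>. set \<gamma> \<subseteq> (cube n :: 'd vertex set) \<and> length \<gamma> = Suc n}"
    using SAW_subset_cube SAW_length by blast
qed (intro finite_lists_length_eq finite_cube)

lemma SAW_nonempty: "SAW n \<noteq> ({} :: ('d::finite) vertex list set)"
proof -
  fix i0 :: 'd
  define f :: "nat \<Rightarrow> 'd vertex" where "f m = (\<lambda>i. if i = i0 then int m else 0)" for m
  have "inj f" by (rule injI) (metis f_def of_nat_eq_iff)
  have l1: "l1norm (\<lambda>j. f m j - f (Suc m) j) = 1" for m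
  proof -
    have "l1norm (\<lambda>j. f m j - f (Suc m) j) = (\<Sum>i\<in>UNIV. if i = i0 then 1 else 0)"
      unfolding l1norm_def by (rule sum.cong) (auto simp: f_def)
    then show ?thesis by simp
  qed
  have nth: "map f [0..<Suc n] ! m = f m" if "m \<le> n" for m
    using that by (simp add: nth_map_upt del: upt_Suc)
  have "map f [0..<Suc n] \<in> SAW n"
    unfolding SAW_def
  proof (intro CollectI conjI allI impI)
    show "distinct (map f [0..<Suc n])"
      using inj_on_subset[OF \<open>inj f\<close>] by (simp add: distinct_map del: upt_Suc)
    show "map f [0..<Suc n] ! 0 = (\<lambda>_. 0)" using nth[of 0] by (simp add: f_def fun_eq_iff)
    show "l1norm (\<lambda>j. (map f [0..<Suc n] ! m) j - (map f [0..<Suc n] ! Suc m) j) = 1"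
      if "m < n" for m
      using that nth l1 by simp
  qed simp
  then show ?thesis by blast
qed

lemma path_edges_SAW: "\<gamma> \<in> SAW n \<Longrightarrow> path_edges \<gamma> = (\<lambda>i. {\<gamma> ! i, \<gamma> ! Suc i}) ` {..<n}"
  unfolding path_edges_def by (auto simp: SAW_length)

lemma path_edges_subset_nn_edges:
  assumes "\<gamma> \<in> SAW n" shows "path_edges \<gamma> \<subseteq> nn_edges"
proof
  fix e assume "e \<in> path_edges \<gamma>"
  then obtain i where "i < n" "e = {\<gamma> ! i, \<gamma> ! Suc i}" using path_edges_SAW[OF assms] by auto
  moreover have "l1norm (\<lambda>j. (\<gamma> ! i) j - (\<gamma> ! Suc i) j) = 1" if "i < n"
    using assms that unfolding SAW_def by simp
  ultimately show "e \<in> nn_edges" unfolding nn_edges_def by blast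
qed

lemma finite_path_edges: "\<gamma> \<in> SAW n \<Longrightarrow> finite (path_edges \<gamma>)"
  by (simp add: path_edges_SAW)

lemma card_path_edges_le: "\<gamma> \<in> SAW n \<Longrightarrow> card (path_edges \<gamma>) \<le> n"
  using card_image_le[of "{..<n}" "\<lambda>i. {\<gamma> ! i, \<gamma> ! Suc i}"] by (simp add: path_edges_SAW)

lemma subset_path_edges_has_code:
  assumes \<gamma>: "\<gamma> \<in> SAW n" and S: "S \<subseteq> path_edges \<gamma>"
  shows "S \<in> case_prod step_edges ` edge_codes n (card S)"
proof -
  let ?edge = "\<lambda>i. {\<gamma> ! i, \<gamma> ! Suc i}"
  obtain P where P: "P \<subseteq> {..<n}" "inj_on ?edge P" "S = ?edge ` P"
    using S unfolding path_edges_SAW[OF \<gamma>] subset_image_inj by blast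
  have "finite P" using P(1) finite_subset by blast
  define L where "L = sorted_list_of_set P"
  have L: "set L = P" "sorted L" "length L = card S"
    unfolding L_def using \<open>finite P\<close> P by (auto simp: card_image)
  define vs where "vs = map ((!) \<gamma>) L"
  define us where "us = map (\<lambda>i j. (\<gamma> ! Suc i) j - (\<gamma> ! i) j) L"
  have "step_edges vs us = S"
    unfolding step_edges_def vs_def us_def zip_map_map zip_same_conv_map P(3) L(1)[symmetric]
    by (simp add: comp_def)
  moreover have "walk_length (\<gamma> ! 0) vs \<le> n - 0"
    unfolding vs_def using L P by (intro walk_length_SAW_le[OF \<gamma>]) auto
  then have "vs \<in> short_walks (\<lambda>_. 0) (card S) n"
    unfolding short_walks_def vs_def using SAW_nth_0[OF \<gamma>] L by simp
  moreover have "set us \<subseteq> unit_vectors"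
    unfolding us_def unit_vectors_def using SAW_step[OF \<gamma>] L P by auto
  moreover have "length us = card S" unfolding us_def using L by simp
  ultimately have "(vs, us) \<in> edge_codes n (card S)" "S = case_prod step_edges (vs, us)"
    unfolding edge_codes_def by auto
  then show ?thesis by blast
qed

section \<open>Separated edge sets\<close>

lemma even_l1norm_minus_sum: "even (l1norm a - (\<Sum>i\<in>UNIV. a i))"
proof -
  have "even (\<bar>x\<bar> - x)" for x :: int by (simp add: abs_if)
  then show ?thesis unfolding l1norm_def sum_subtractf[symmetric] by (intro dvd_sum) simp
qed

text \<open>Adjacent vertices have \<open>\<ell>\<^sup>1\<close> norms of different parity, so \<open>vtx\<close> is well defined
  on nearest-neighbour edges.\<close>

lemma l1norm_neq_if_adjacent:
  assumes "l1norm (\<lambda>i. a i - b i) = 1" shows "l1norm a \<noteq> l1norm b"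
proof
  assume eq: "l1norm a = l1norm b"
  have "l1norm a - l1norm b - l1norm (\<lambda>i. a i - b i)
      = (l1norm a - (\<Sum>i\<in>UNIV. a i)) - (l1norm b - (\<Sum>i\<in>UNIV. b i))
        - (l1norm (\<lambda>i. a i - b i) - (\<Sum>i\<in>UNIV. a i - b i))"
    by (simp add: sum_subtractf)
  then have "even (l1norm a - l1norm b - l1norm (\<lambda>i. a i - b i))"
    using dvd_diff[OF dvd_diff[OF even_l1norm_minus_sum even_l1norm_minus_sum]
        even_l1norm_minus_sum]
    by (simp only:)
  then show False using eq assms by simp
qed

lemma vtx_eqI: "e = {a, b} \<Longrightarrow> l1norm a < l1norm b \<Longrightarrow> vtx e = a"
  unfolding vtx_def by (rule the_equality) auto

lemma nn_edge_at_vtx: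
  assumes "e \<in> nn_edges" shows "\<exists>u\<in>unit_vectors. e = {vtx e, \<lambda>i. vtx e i + u i}"
proof -
  have *: "\<exists>u\<in>unit_vectors. e = {vtx e, \<lambda>i. vtx e i + u i}"
    if "e = {a, b}" "l1norm (\<lambda>i. a i - b i) = 1" "l1norm a < l1norm b" for a b
  proof
    show "(\<lambda>i. b i - a i) \<in> unit_vectors"
      using that(2) l1norm_diff_commute[of a b] by (simp add: unit_vectors_def)
    show "e = {vtx e, \<lambda>i. vtx e i + (b i - a i)}" using that by (simp add: vtx_eqI)
  qed
  obtain a b where ab: "e = {a, b}" "l1norm (\<lambda>i. a i - b i) = 1"
    using assms unfolding nn_edges_def by blast
  then have "l1norm a < l1norm b \<or> l1norm b < l1norm a"
    using l1norm_neq_if_adjacent by fastforce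
  then show ?thesis
    using *[of a b] *[of b a] ab l1norm_diff_commute[of a b] by (auto simp: insert_commute)
qed

lemma abs_le_linfnorm: "\<bar>a i\<bar> \<le> linfnorm a"
  unfolding linfnorm_def by (rule Max_ge) auto

lemma far_edges_sym: "e \<in> nn_edges \<Longrightarrow> e' \<in> far_edges k e \<Longrightarrow> e \<in> far_edges k e'"
  unfolding far_edges_def linfnorm_def by (simp add: abs_minus_commute)

definition near_edges :: "nat \<Rightarrow> ('d::finite) edge \<Rightarrow> 'd edge set" where
  "near_edges k e = insert e {e' \<in> nn_edges. e' \<notin> far_edges k e}"

text \<open>At most \<open>(2 k + 1) ^ d\<close> choices for \<open>vtx\<close> of an edge that is not far from \<open>e\<close>,
  times at most \<open>3 ^ d\<close> directions, plus \<open>e\<close> itself.\<close>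

definition near_bound :: "nat \<Rightarrow> nat \<Rightarrow> nat" where
  "near_bound k d = (2 * k + 1) ^ d * 3 ^ d + 1"

lemma near_bound_ge_1: "real (near_bound k d) \<ge> 1"
  by (simp add: near_bound_def)

lemma not_far_edges_subset:
  "{e' \<in> nn_edges. e' \<notin> far_edges k e} \<subseteq>
     (\<lambda>(v, u). {v, \<lambda>i. v i + u i}) ` ((\<lambda>a i. a i + vtx e i) ` cube k \<times> unit_vectors)"
proof
  fix e' assume e': "e' \<in> {e' \<in> nn_edges. e' \<notin> far_edges k e}"
  then obtain u where u: "u \<in> unit_vectors" "e' = {vtx e', \<lambda>i. vtx e' i + u i}"
    using nn_edge_at_vtx by blast
  have "linfnorm (\<lambda>j. vtx e j - vtx e' j) < int k" using e' by (auto simp: far_edges_def)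
  then have "\<bar>vtx e' i - vtx e i\<bar> \<le> int k" for i
    using abs_le_linfnorm[of "\<lambda>j. vtx e j - vtx e' j" i] by (simp add: abs_minus_commute)
  then have "vtx e' \<in> (\<lambda>a i. a i + vtx e i) ` cube k"
    unfolding cube_def by (intro image_eqI[of _ _ "\<lambda>i. vtx e' i - vtx e i"]) auto
  then show "e' \<in> (\<lambda>(v, u). {v, \<lambda>i. v i + u i}) ` ((\<lambda>a i. a i + vtx e i) ` cube k \<times> unit_vectors)"
    using u by (intro image_eqI[of _ _ "(vtx e', u)"]) auto
qed

lemma
  shows finite_near_edges: "finite (near_edges k (e::('d::finite) edge))"
    and card_near_edges_le: "card (near_edges k e) \<le> near_bound k CARD('d)"
proof -
  let ?A = "(\<lambda>a i. a i + vtx e i) ` (cube k :: 'd vertex set) \<times> (unit_vectors :: 'd vertex set)"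
  let ?B = "(\<lambda>(v, u). {v, \<lambda>i. v i + u i}) ` ?A"
  let ?N = "{e' \<in> nn_edges. e' \<notin> far_edges k e}"
  have "finite ?A" by (intro finite_cartesian_product finite_imageI finite_cube finite_unit_vectors)
  have "card ?B \<le> card ?A" by (rule card_image_le[OF \<open>finite ?A\<close>])
  also have "\<dots> \<le> card (cube k :: 'd vertex set) * card (unit_vectors :: 'd vertex set)"
    unfolding card_cartesian_product by (intro mult_le_mono1 card_image_le finite_cube)
  also have "\<dots> \<le> (2 * k + 1) ^ CARD('d) * 3 ^ CARD('d)"
    unfolding card_cube by (intro mult_le_mono2 card_unit_vectors_le)
  finally have "card ?B \<le> (2 * k + 1) ^ CARD('d) * 3 ^ CARD('d)" .
  moreover have "finite ?B" using \<open>finite ?A\<close> by (rule finite_imageI)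
  ultimately have "finite ?N" "card ?N \<le> (2 * k + 1) ^ CARD('d) * 3 ^ CARD('d)"
    using not_far_edges_subset[of k e] card_mono[of ?B ?N] finite_subset[of ?N ?B] by auto
  then show "finite (near_edges k e)" "card (near_edges k e) \<le> near_bound k CARD('d)"
    unfolding near_edges_def near_bound_def by (auto simp: card_insert_if)
qed

definition separated :: "nat \<Rightarrow> ('d::finite) edge set \<Rightarrow> bool" where
  "separated k S \<longleftrightarrow> (\<forall>e\<in>S. \<forall>e'\<in>S. e \<noteq> e' \<longrightarrow> e' \<in> far_edges k e)"

lemma separated_subset: "separated k S \<Longrightarrow> S' \<subseteq> S \<Longrightarrow> separated k S'"
  unfolding separated_def by blast

lemma separated_insert:
  assumes "separated k S" "e \<in> nn_edges" "S \<subseteq> far_edges k e"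
  shows "separated k (insert e S)"
  unfolding separated_def
proof (intro ballI impI)
  fix x y assume "x \<in> insert e S" "y \<in> insert e S" "x \<noteq> y"
  then show "y \<in> far_edges k x"
    using assms far_edges_sym[of e y k] far_edges_sym[of e x k] unfolding separated_def by auto
qed

text \<open>Greedy selection: each chosen edge excludes at most \<open>near_bound k d\<close> edges.\<close>

lemma exists_separated_subset:
  assumes "finite T" "T \<subseteq> nn_edges" "near_bound k CARD('d) * j < card T"
  shows "\<exists>S\<subseteq>T. card S = Suc j \<and> separated k (S :: ('d::finite) edge set)"
  using assms
proof (induction j arbitrary: T)
  case 0
  then obtain e where "e \<in> T" by (metis card.empty ex_in_conv less_irrefl mult_0_right)
  then show ?case by (intro exI[of _ "{e}"]) (auto simp: separated_def)
next
  case (Suc j)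
  then obtain e where e: "e \<in> T" by (metis card.empty ex_in_conv less_nat_zero_code)
  have "card T \<le> card ((T - near_edges k e) \<union> near_edges k e)"
    using Suc.prems(1) finite_near_edges by (intro card_mono) auto
  also have "\<dots> \<le> card (T - near_edges k e) + card (near_edges k e)"
    by (rule card_Un_le)
  finally have "near_bound k CARD('d) * j < card (T - near_edges k e)"
    using Suc.prems(3) card_near_edges_le[of k e] by simp
  then obtain S where S: "S \<subseteq> T - near_edges k e" "card S = Suc j" "separated k S"
    using Suc.IH[of "T - near_edges k e"] Suc.prems by auto
  have "S \<subseteq> far_edges k e" "e \<notin> S"
    using S(1) Suc.prems(2) unfolding near_edges_def by auto
  moreover have "finite S" using S(2) card_ge_0_finite by force
  ultimately have "separated k (insert e S)" "card (insert e S) = Suc (Suc j)"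
    using separated_insert[OF S(3)] Suc.prems(2) e S(2) by auto
  then show ?case using e S(1) by (intro exI[of _ "insert e S"]) auto
qed

lemma Nmax_attained: "\<exists>\<gamma>\<in>SAW n. Nmax X n \<omega> = real (card {e \<in> path_edges \<gamma>. X e \<omega>})"
proof -
  let ?f = "\<lambda>\<gamma>. \<Sum>e\<in>path_edges \<gamma>. of_bool (X e \<omega>) :: real"
  have "Max (?f ` SAW n) \<in> ?f ` SAW n"
    using finite_SAW SAW_nonempty by (intro Max_in) auto
  then obtain \<gamma> where \<gamma>: "\<gamma> \<in> SAW n" "Nmax X n \<omega> = ?f \<gamma>" unfolding Nmax_def by auto
  have "?f \<gamma> = real (card {e \<in> path_edges \<gamma>. X e \<omega>})"
    using sum_of_bool_eq[OF finite_path_edges[OF \<gamma>(1)] finite_path_edges[OF \<gamma>(1)]]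
    by (simp only: Int_def mem_Collect_eq)
  then show ?thesis using \<gamma> by auto
qed

lemma Nmax_nonneg: "0 \<le> Nmax X n \<omega>"
proof -
  obtain \<gamma> where "Nmax X n \<omega> = real (card {e \<in> path_edges \<gamma>. X e \<omega>})"
    using Nmax_attained[of n X \<omega>] by blast
  then show ?thesis by simp
qed

lemma Nmax_le: "Nmax X n \<omega> \<le> real n"
proof -
  obtain \<gamma> where \<gamma>: "\<gamma> \<in> SAW n" "Nmax X n \<omega> = real (card {e \<in> path_edges \<gamma>. X e \<omega>})"
    using Nmax_attained[of n X \<omega>] by blast
  have "card {e \<in> path_edges \<gamma>. X e \<omega>} \<le> card (path_edges \<gamma>)"
    using finite_path_edges[OF \<gamma>(1)] by (intro card_mono) auto
  then show ?thesis using \<gamma> card_path_edges_le[OF \<gamma>(1)] by simp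
qed

lemma Nmax_gt_imp_separated_open_edges:
  assumes "real (near_bound k CARD('d) * j) < Nmax X n \<omega>"
  shows "\<exists>S\<in>case_prod step_edges ` edge_codes n (Suc j).
    S \<subseteq> nn_edges \<and> separated k (S :: ('d::finite) edge set) \<and> card S = Suc j \<and> (\<forall>e\<in>S. X e \<omega>)"
proof -
  obtain \<gamma> where \<gamma>: "\<gamma> \<in> SAW n" "Nmax X n \<omega> = real (card {e \<in> path_edges \<gamma>. X e \<omega>})"
    using Nmax_attained[of n X \<omega>] by blast
  let ?T = "{e \<in> path_edges \<gamma>. X e \<omega>}"
  have "finite ?T" "?T \<subseteq> nn_edges"
    using finite_path_edges[OF \<gamma>(1)] path_edges_subset_nn_edges[OF \<gamma>(1)] by auto
  moreover have "near_bound k CARD('d) * j < card ?T" using assms \<gamma>(2) by linarith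
  ultimately obtain S where S: "S \<subseteq> ?T" "card S = Suc j" "separated k S"
    using exists_separated_subset[of ?T k j] by blast
  have "S \<in> case_prod step_edges ` edge_codes n (Suc j)"
    using subset_path_edges_has_code[OF \<gamma>(1), of S] S(1,2) by auto
  moreover have "S \<subseteq> nn_edges" "\<forall>e\<in>S. X e \<omega>" using S(1) \<open>?T \<subseteq> nn_edges\<close> by auto
  ultimately show ?thesis using S(2,3) by blast
qed

lemma exists_nat_bracket:
  fixes r c :: real assumes "0 < r" "0 < c"
  obtains j :: nat where "c * real j < r" "r / c \<le> real (Suc j)"
proof
  define j where "j = nat \<lceil>r / c\<rceil> - 1"
  have "\<lceil>r / c\<rceil> \<ge> 1" using assms by (simp add: le_ceiling_iff)
  then have j: "real (Suc j) = of_int \<lceil>r / c\<rceil>" unfolding j_def by (simp add: of_nat_diff)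
  then show "r / c \<le> real (Suc j)" by simp
  have "real j < r / c" using j ceiling_correct[of "r / c"] by linarith
  then show "c * real j < r" using assms by (simp add: field_simps)
qed

lemma powr_one_div_power:
  fixes p :: real assumes "0 \<le> p" "d \<ge> 1"
  shows "(p powr (1 / real d)) ^ d = p"
  using assms by (cases "p = 0") (simp_all add: powr_realpow[symmetric] powr_powr)

lemma one_le_powr_neg:
  fixes p :: real assumes "0 < p" "p \<le> 1" "0 \<le> a" shows "1 \<le> p powr (- a)"
  using assms by (simp add: powr_minus_divide powr_le1)

lemma inverse_one_minus_exp_le:
  fixes y :: real assumes "0 < y" shows "1 / (1 - exp (- y)) \<le> 1 + 1 / y"
proof -
  have "1 + y \<le> exp y" by (rule exp_ge_add_one_self)
  then have "exp (- y) \<le> 1 / (1 + y)"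
    using assms by (simp add: exp_minus inverse_eq_divide divide_le_eq field_simps)
  then have le: "y / (1 + y) \<le> 1 - exp (- y)" using assms by (simp add: field_simps)
  have "0 < (1 - exp (- y)) * (y / (1 + y))" using assms by simp
  then have "1 / (1 - exp (- y)) \<le> 1 / (y / (1 + y))" by (rule divide_left_mono[OF le zero_le_one])
  also have "\<dots> = 1 + 1 / y" using assms by (simp add: field_simps)
  finally show ?thesis .
qed

lemma square_le_4_exp:
  fixes u :: real assumes "0 \<le> u" shows "u ^ 2 \<le> 4 * exp u"
proof -
  have "u / 2 \<le> exp (u / 2)" using exp_ge_add_one_self[of "u / 2"] by linarith
  then have "(u / 2) ^ 2 \<le> exp (u / 2) ^ 2" using assms by (intro power_mono) auto
  also have "exp (u / 2) ^ 2 = exp u" by (simp add: power2_eq_square flip: exp_add)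
  finally show ?thesis by (simp add: power_divide)
qed

text \<open>Half of the exponent pays for the prefactor \<open>1 + c * u\<close>, the other half gives the
  decay in \<open>s\<close>.\<close>

lemma exp_affine_prefactor_le:
  fixes c s u :: real assumes c: "c \<ge> 1" and s: "s \<ge> 1" and u: "u \<ge> 1"
  shows "exp (- s * u / c) * (1 + c * u) \<le> 2 * c ^ 2 * exp (- (1 / (2 * c)) * s)"
proof -
  define v where "v = u / (2 * c)"
  have "0 \<le> v" unfolding v_def using c u by simp
  have "s \<le> s * u" "u \<le> s * u"
    using s u by (simp_all add: mult_le_cancel_left1 mult_le_cancel_right1)
  then have halves: "exp (- s * u / (2 * c)) \<le> exp (- (1 / (2 * c)) * s)"
    "exp (- s * u / (2 * c)) \<le> exp (- v)"
    unfolding v_def using c by (simp_all add: divide_right_mono)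
  have "1 \<le> 2 * c ^ 2" using c one_le_power[of c 2] by linarith
  then have "1 + c * u \<le> 2 * c ^ 2 * (1 + v)"
    unfolding v_def using c by (simp add: power2_eq_square field_simps)
  also have "\<dots> \<le> 2 * c ^ 2 * exp v" by (intro mult_left_mono exp_ge_add_one_self) simp
  finally have prefactor: "exp (- v) * (1 + c * u) \<le> 2 * c ^ 2"
    by (simp add: exp_minus field_simps)
  have "exp (- s * u / c) * (1 + c * u)
      = exp (- s * u / (2 * c)) * (exp (- s * u / (2 * c)) * (1 + c * u))"
    by (simp add: mult.assoc flip: exp_add)
  also have "\<dots> \<le> exp (- (1 / (2 * c)) * s) * (exp (- v) * (1 + c * u))"
    using halves c u by (intro mult_mono) auto
  also have "\<dots> \<le> exp (- (1 / (2 * c)) * s) * (2 * c ^ 2)"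
    using prefactor by (intro mult_left_mono) auto
  finally show ?thesis by (simp only: mult.commute)
qed

lemma exp_affine_prefactor_le_inverse:
  fixes c l u :: real assumes c: "c \<ge> 1" and u: "u \<ge> 1" and l: "l \<ge> 1"
  shows "exp (- l * u) * (1 + c * u) \<le> 4 * (1 + c) / u"
proof -
  have "exp (- l * u) \<le> exp (- u)" using l u by (simp add: mult_le_cancel_right1)
  moreover have "1 + c * u \<le> (1 + c) * u" using u c by (simp add: algebra_simps)
  ultimately have "exp (- l * u) * (1 + c * u) \<le> exp (- u) * ((1 + c) * u)"
    using c u by (intro mult_mono) auto
  also have "\<dots> = (1 + c) * (u ^ 2 * exp (- u)) / u"
    using u by (simp add: power2_eq_square field_simps)
  also have "\<dots> \<le> (1 + c) * 4 / u"
  proof -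
    have "u ^ 2 * exp (- u) \<le> 4 * exp u * exp (- u)"
      using square_le_4_exp[of u] u by (intro mult_right_mono) auto
    moreover have "4 * exp u * exp (- u) = 4" by (simp add: exp_minus)
    ultimately have "u ^ 2 * exp (- u) \<le> 4" by linarith
    then show ?thesis using c u by (intro divide_right_mono mult_left_mono) auto
  qed
  finally show ?thesis by (simp add: mult.commute)
qed

lemma sum_of_bool_less_le:
  fixes R :: real assumes "R \<ge> 0" shows "(\<Sum>m=1..n. of_bool (real m < R)) \<le> R"
proof -
  have "{1..n} \<inter> {m. real m < R} \<subseteq> {1..nat \<lfloor>R\<rfloor>}"
    by (auto simp: le_nat_iff le_floor_iff)
  then have "card ({1..n} \<inter> {m. real m < R}) \<le> nat \<lfloor>R\<rfloor>"
    using card_mono[of "{1..nat \<lfloor>R\<rfloor>}"] by fastforce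
  then have "real (card ({1..n} \<inter> {m. real m < R})) \<le> R" using assms by linarith
  then show ?thesis by simp
qed

definition lambda0 :: real where "lambda0 = 12 * exp 2"

lemma lambda0_ge_1: "lambda0 \<ge> 1"
  unfolding lambda0_def using one_le_exp_iff[of 2] by linarith

lemma one_le_near_bound_lambda0: "1 \<le> real (near_bound k d) * lambda0"
  using mult_mono[OF near_bound_ge_1 lambda0_ge_1] by simp

definition exp_series_bound :: "real \<Rightarrow> real" where
  "exp_series_bound c = 1 / (1 - exp (- 1 / c))"

lemma exp_series_bound_pos: "c > 0 \<Longrightarrow> exp_series_bound c > 0"
  unfolding exp_series_bound_def by simp

lemma sum_exp_le_exp_series_bound:
  assumes "c > 0" shows "(\<Sum>m=1..n. exp (- real m / c)) \<le> exp_series_bound c"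
proof -
  let ?y = "exp (- 1 / c)"
  have y: "0 \<le> ?y" "?y < 1" using assms by auto
  have "(\<Sum>m=1..n. exp (- real m / c)) = (\<Sum>m=1..n. ?y ^ m)"
    by (intro sum.cong) (auto simp: exp_of_nat_mult[symmetric])
  also have "\<dots> \<le> (\<Sum>m\<le>n. ?y ^ m)" using y by (intro sum_mono2) auto
  also have "\<dots> \<le> exp_series_bound c" unfolding exp_series_bound_def by (rule geometric_sum_le[OF y])
  finally show ?thesis .
qed

text \<open>Large enough for the three regimes in the proof of (i) and for (ii).\<close>

definition mean_const :: "real \<Rightarrow> real" where
  "mean_const c = (1 + c) * (lambda0 + 4) + lambda0 * exp_series_bound c"

lemma mean_const_bounds:
  assumes "c \<ge> 1"
  shows "lambda0 \<le> mean_const c" "lambda0 * exp_series_bound c \<le> mean_const c"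
    "c * lambda0 + lambda0 * exp_series_bound c \<le> mean_const c"
    "c * lambda0 + 4 * (1 + c) \<le> mean_const c"
  using assms exp_series_bound_pos[of c] lambda0_ge_1 by (auto simp: mean_const_def algebra_simps)

lemma (in prob_space) expectation_le_add_prob_gt:
  fixes f :: "'a \<Rightarrow> real"
  assumes "0 \<le> a" "\<And>\<omega>. 0 \<le> f \<omega>" "\<And>\<omega>. f \<omega> \<le> 1" "f \<in> borel_measurable M"
  shows "expectation f \<le> a + prob {\<omega> \<in> space M. a < f \<omega>}"
proof -
  let ?S = "{\<omega> \<in> space M. a < f \<omega>}"
  have "?S \<in> events" using assms(4) by measurable
  have "expectation f \<le> expectation (\<lambda>\<omega>. a + indicator ?S \<omega>)"
  proof (rule integral_mono)
    show "integrable M f" using assms(2-4) by (intro integrable_const_bound[where B = 1]) auto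
    show "integrable M (\<lambda>\<omega>. a + indicator ?S \<omega>)"
      using \<open>?S \<in> events\<close>
      by (intro Bochner_Integration.integrable_add integrable_real_indicator)
        (auto simp: less_top[symmetric])
    show "f \<omega> \<le> a + indicator ?S \<omega>" if "\<omega> \<in> space M" for \<omega>
      using that assms(1) assms(3)[of \<omega>] by (auto simp: indicator_def)
  qed
  also have "\<dots> = a + prob ?S"
    using \<open>?S \<in> events\<close>
    by (subst Bochner_Integration.integral_add) (auto simp: prob_space less_top[symmetric])
  finally show ?thesis .
qed

section \<open>Finite-range dependent percolation\<close>

locale finite_range_percolation = prob_space M
  for M :: "('d::finite edge \<Rightarrow> bool) measure" +
  fixes X :: "'d edge \<Rightarrow> ('d edge \<Rightarrow> bool) \<Rightarrow> bool" and p :: real and k :: nat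
  assumes p_nonneg: "0 \<le> p" and p_le_1: "p \<le> 1"
    and measurable_X: "\<And>e. e \<in> nn_edges \<Longrightarrow> X e \<in> measurable M (count_space UNIV)"
    and prob_X: "\<And>e. e \<in> nn_edges \<Longrightarrow> prob {\<omega> \<in> space M. X e \<omega>} = p"
    and indep_far_edges: "\<And>e. e \<in> nn_edges \<Longrightarrow> indep_set
          {X e -` A \<inter> space M | A. A \<in> sets (count_space UNIV)}
          {(\<lambda>\<omega>. \<lambda>e'\<in>far_edges k e. X e' \<omega>) -` A \<inter> space M | A.
             A \<in> sets (PiM (far_edges k e) (\<lambda>_. count_space UNIV))}"
begin

definition all_open :: "'d edge set \<Rightarrow> ('d edge \<Rightarrow> bool) set" where
  "all_open S = {\<omega> \<in> space M. \<forall>e\<in>S. X e \<omega>}"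

lemma all_open_insert: "all_open (insert e S) = {\<omega> \<in> space M. X e \<omega>} \<inter> all_open S"
  unfolding all_open_def by auto

lemma sets_open_edge: "e \<in> nn_edges \<Longrightarrow> {\<omega> \<in> space M. X e \<omega>} \<in> events"
  using measurable_sets[OF measurable_X, of e "{True}"]
  by (simp add: vimage_def Int_def conj_commute)

lemma sets_all_open: "finite S \<Longrightarrow> S \<subseteq> nn_edges \<Longrightarrow> all_open S \<in> events"
  by (induction S rule: finite_induct)
    (auto simp: all_open_insert sets_open_edge, simp add: all_open_def)

lemma prob_all_open:
  "finite S \<Longrightarrow> S \<subseteq> nn_edges \<Longrightarrow> separated k S \<Longrightarrow> prob (all_open S) = p ^ card S"
proof (induction S rule: finite_induct)
  case empty
  then show ?case by (simp add: all_open_def prob_space)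
next
  case (insert e S)
  let ?F = "far_edges k e"
  let ?P = "PiM ?F (\<lambda>_. count_space (UNIV :: bool set))"
  let ?restr = "\<lambda>\<omega>. \<lambda>e'\<in>?F. X e' \<omega>"
  have e: "e \<in> nn_edges" and "S \<subseteq> ?F"
    using insert.prems insert.hyps(2) unfolding separated_def by auto
  have "(\<lambda>f. \<forall>e'\<in>S. f e') \<in> measurable ?P (count_space UNIV)"
    using \<open>S \<subseteq> ?F\<close> insert.hyps(1) by (intro pred_intros_finite(3)) auto
  then have C: "{f \<in> space ?P. \<forall>e'\<in>S. f e'} \<in> sets ?P" by (simp add: pred_def)
  have "all_open S = ?restr -` {f \<in> space ?P. \<forall>e'\<in>S. f e'} \<inter> space M"
    using \<open>S \<subseteq> ?F\<close> unfolding all_open_def space_PiM by (auto simp: restrict_PiE_iff)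
  with C have far: "all_open S \<in> {?restr -` A \<inter> space M | A. A \<in> sets ?P}" by blast
  have near: "{\<omega> \<in> space M. X e \<omega>} \<in> {X e -` A \<inter> space M | A. A \<in> sets (count_space UNIV)}"
    by (intro CollectI exI[of _ "{True}"]) auto
  have "prob (all_open (insert e S)) = prob {\<omega> \<in> space M. X e \<omega>} * prob (all_open S)"
    unfolding all_open_insert by (rule indep_setD[OF indep_far_edges[OF e] near far])
  also have "\<dots> = p * p ^ card S"
    using insert separated_subset[OF insert.prems(2)] prob_X[OF e] by auto
  finally show ?case using insert.hyps by simp
qed

lemma borel_measurable_Nmax[measurable]: "Nmax X n \<in> borel_measurable M"
proof -
  have "(\<lambda>\<omega>. of_bool (X e \<omega>) :: real) \<in> borel_measurable M" if "e \<in> nn_edges" for e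
    by (rule measurable_compose[OF measurable_X[OF that]]) simp
  then have "(\<lambda>\<omega>. \<Sum>e\<in>path_edges \<gamma>. of_bool (X e \<omega>) :: real) \<in> borel_measurable M"
    if "\<gamma> \<in> SAW n" for \<gamma>
    using path_edges_subset_nn_edges[OF that] by (intro borel_measurable_sum) auto
  then show ?thesis
    unfolding Nmax_def[abs_def] by (intro borel_measurable_Max finite_SAW) auto
qed

lemma sets_Nmax_ge: "{\<omega> \<in> space M. r \<le> Nmax X n \<omega>} \<in> events"
  by measurable

lemma sets_Nmax_gt: "{\<omega> \<in> space M. r < Nmax X n \<omega>} \<in> events"
  by measurable

lemma prob_Nmax_gt_le:
  fixes x :: real assumes x: "0 < x" "x < 1"
  shows "prob {\<omega> \<in> space M. real (near_bound k CARD('d) * j) < Nmax X n \<omega>}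
           \<le> (1 / x) ^ n * ((6 / (1 - x)) ^ CARD('d)) ^ Suc j * p ^ Suc j"
proof -
  let ?codes = "edge_codes n (Suc j) :: ('d vertex list \<times> 'd vertex list) set"
  define \<S> where
    "\<S> = {S \<in> case_prod step_edges ` ?codes. S \<subseteq> nn_edges \<and> separated k S \<and> card S = Suc j}"
  have sub: "\<S> \<subseteq> case_prod step_edges ` ?codes" unfolding \<S>_def by blast
  have fin: "finite (case_prod step_edges ` ?codes)" by (rule finite_imageI[OF finite_edge_codes])
  then have "finite \<S>" using sub by (rule finite_subset[rotated])
  have card_\<S>: "card \<S> \<le> card ?codes"
    using card_mono[OF fin sub] card_image_le[OF finite_edge_codes] by (rule le_trans)
  have S: "finite S" "S \<subseteq> nn_edges" "separated k S" "card S = Suc j" if "S \<in> \<S>" for S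
    using that card_ge_0_finite[of S] unfolding \<S>_def by auto
  then have events: "all_open S \<in> events" if "S \<in> \<S>" for S
    using that by (intro sets_all_open) auto
  have "{\<omega> \<in> space M. real (near_bound k CARD('d) * j) < Nmax X n \<omega>} \<subseteq> (\<Union>S\<in>\<S>. all_open S)"
  proof
    fix \<omega> assume \<omega>: "\<omega> \<in> {\<omega> \<in> space M. real (near_bound k CARD('d) * j) < Nmax X n \<omega>}"
    then obtain S where "S \<in> \<S>" "\<forall>e\<in>S. X e \<omega>"
      using Nmax_gt_imp_separated_open_edges[of k j X n \<omega>] unfolding \<S>_def by auto
    then show "\<omega> \<in> (\<Union>S\<in>\<S>. all_open S)" using \<omega> unfolding all_open_def by blast
  qed
  then have "prob {\<omega> \<in> space M. real (near_bound k CARD('d) * j) < Nmax X n \<omega>}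
      \<le> prob (\<Union>S\<in>\<S>. all_open S)"
    using events \<open>finite \<S>\<close> by (intro finite_measure_mono sets.finite_UN) auto
  also have "\<dots> \<le> (\<Sum>S\<in>\<S>. prob (all_open S))"
    using events \<open>finite \<S>\<close> by (intro measure_UNION_le) auto
  also have "\<dots> = (\<Sum>S\<in>\<S>. p ^ Suc j)"
    using prob_all_open S by (intro sum.cong) auto
  also have "\<dots> \<le> real (card ?codes) * p ^ Suc j"
    using card_\<S> p_nonneg by (simp add: mult_right_mono)
  also have "\<dots> \<le> (1 / x) ^ n * ((6 / (1 - x)) ^ CARD('d)) ^ Suc j * p ^ Suc j"
    by (rule mult_right_mono[OF card_edge_codes_le[OF x]]) (simp add: p_nonneg)
  finally show ?thesis .
qed

lemma powr_card_power: "(p powr (1 / real CARD('d))) ^ CARD('d) = p"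
  using powr_one_div_power[OF p_nonneg card_ge_1] .

lemma prob_Nmax_gt_le_exp:
  assumes \<eta>: "0 < \<eta>" "\<eta> \<le> 1"
  shows "prob {\<omega> \<in> space M. real (near_bound k CARD('d) * j) < Nmax X n \<omega>}
           \<le> exp (\<eta> * real n) * ((12 / \<eta>) ^ CARD('d) * p) ^ Suc j"
proof -
  define x where "x = 1 / (1 + \<eta>)"
  have x: "0 < x" "x < 1" using \<eta> by (auto simp: x_def)
  have "(1 / x) ^ n = (1 + \<eta>) ^ n" by (simp add: x_def)
  also have "\<dots> \<le> exp \<eta> ^ n" using \<eta> by (intro power_mono) (auto simp: add.commute)
  finally have growth: "(1 / x) ^ n \<le> exp (\<eta> * real n)"
    by (simp add: exp_of_nat_mult[symmetric] mult.commute)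
  have "6 / (1 - x) = 6 * (1 + \<eta>) / \<eta>" using \<eta> by (simp add: x_def field_simps)
  also have "\<dots> \<le> 12 / \<eta>" using \<eta> by (intro divide_right_mono) auto
  finally have "((6 / (1 - x)) ^ CARD('d)) ^ Suc j * p ^ Suc j
      \<le> ((12 / \<eta>) ^ CARD('d)) ^ Suc j * p ^ Suc j"
    using x p_nonneg by (intro mult_right_mono power_mono) auto
  then have "((6 / (1 - x)) ^ CARD('d)) ^ Suc j * p ^ Suc j \<le> ((12 / \<eta>) ^ CARD('d) * p) ^ Suc j"
    by (simp only: power_mult_distrib)
  then have "(1 / x) ^ n * ((6 / (1 - x)) ^ CARD('d)) ^ Suc j * p ^ Suc j
      \<le> exp (\<eta> * real n) * ((12 / \<eta>) ^ CARD('d) * p) ^ Suc j"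
    unfolding mult.assoc using growth x p_nonneg by (intro mult_mono) auto
  then show ?thesis using prob_Nmax_gt_le[OF x, of j n] by linarith
qed

lemma prob_Nmax_ge_le_exp:
  assumes "0 < \<eta>" "\<eta> \<le> 1" "0 < r"
  obtains j where "r / real (near_bound k CARD('d)) \<le> real (Suc j)"
    "prob {\<omega> \<in> space M. r \<le> Nmax X n \<omega>} \<le> exp (\<eta> * real n) * ((12 / \<eta>) ^ CARD('d) * p) ^ Suc j"
proof -
  have "0 < real (near_bound k CARD('d))" using near_bound_ge_1[of k "CARD('d)"] by linarith
  then obtain j where j: "real (near_bound k CARD('d)) * real j < r"
      "r / real (near_bound k CARD('d)) \<le> real (Suc j)"
    using exists_nat_bracket[OF \<open>0 < r\<close>] by blast
  have "prob {\<omega> \<in> space M. r \<le> Nmax X n \<omega>}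
      \<le> prob {\<omega> \<in> space M. real (near_bound k CARD('d) * j) < Nmax X n \<omega>}"
    using j(1) by (intro finite_measure_mono sets_Nmax_gt) auto
  also have "\<dots> \<le> exp (\<eta> * real n) * ((12 / \<eta>) ^ CARD('d) * p) ^ Suc j"
    using assms by (intro prob_Nmax_gt_le_exp) auto
  finally show ?thesis using j(2) that by blast
qed

text \<open>The case \<open>\<eta> = lambda0 * p powr (1 / d)\<close>: \<open>lambda0\<close> is chosen so that the base
  \<open>(12 / \<eta>) ^ d * p\<close> becomes \<open>exp (- 2 * d)\<close>.\<close>

lemma prob_Nmax_ge_le_exp_large:
  assumes "0 < p" "lambda0 * p powr (1 / real CARD('d)) \<le> 1" "0 < r"
    and "real (near_bound k CARD('d)) * lambda0 * p powr (1 / real CARD('d)) * real n \<le> r"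
  shows "prob {\<omega> \<in> space M. r \<le> Nmax X n \<omega>} \<le> exp (- r / real (near_bound k CARD('d)))"
proof -
  let ?\<eta> = "lambda0 * p powr (1 / real CARD('d))"
  have "0 < ?\<eta>" using assms(1) lambda0_ge_1 by simp
  then obtain j where j: "r / real (near_bound k CARD('d)) \<le> real (Suc j)"
    and P: "prob {\<omega> \<in> space M. r \<le> Nmax X n \<omega>}
              \<le> exp (?\<eta> * real n) * ((12 / ?\<eta>) ^ CARD('d) * p) ^ Suc j"
    using prob_Nmax_ge_le_exp assms(2,3) by blast
  have "(12 / ?\<eta>) ^ CARD('d) * p = (12 / ?\<eta>) ^ CARD('d) * (p powr (1 / real CARD('d))) ^ CARD('d)"
    by (simp only: powr_card_power)
  also have "\<dots> = (12 / ?\<eta> * p powr (1 / real CARD('d))) ^ CARD('d)"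
    by (simp only: power_mult_distrib)
  also have "\<dots> = exp (- 2) ^ CARD('d)"
    using assms(1) by (simp add: lambda0_def exp_minus inverse_eq_divide)
  also have "\<dots> \<le> exp (- 2) ^ 1" using card_ge_1 by (intro power_decreasing) auto
  finally have "((12 / ?\<eta>) ^ CARD('d) * p) ^ Suc j \<le> exp (- 2) ^ Suc j"
    using p_nonneg lambda0_ge_1 by (intro power_mono) auto
  also have "\<dots> = exp (- 2 * real (Suc j))"
    by (simp add: exp_of_nat_mult[symmetric] mult.commute flip: exp_add)
  finally have "prob {\<omega> \<in> space M. r \<le> Nmax X n \<omega>} \<le> exp (?\<eta> * real n) * exp (- 2 * real (Suc j))"
    using order_trans[OF P mult_left_mono[OF _ exp_ge_zero]] by blast
  also have "\<dots> = exp (?\<eta> * real n - 2 * real (Suc j))" by (simp flip: exp_add)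
  also have "\<dots> \<le> exp (- r / real (near_bound k CARD('d)))"
  proof -
    have "0 < real (near_bound k CARD('d))" using near_bound_ge_1[of k "CARD('d)"] by linarith
    then have "?\<eta> * real n \<le> r / real (near_bound k CARD('d))"
      using assms(4) by (simp add: field_simps)
    then show ?thesis using j by simp
  qed
  finally show ?thesis .
qed

text \<open>The case \<open>\<eta> = 1 / n\<close>, useful when \<open>n * p powr (1 / d)\<close> is small.\<close>

lemma prob_Nmax_ge_le_exp_small:
  assumes "n \<ge> 1" "12 * (real n * p powr (1 / real CARD('d))) \<le> exp (- 1)" "0 < r"
  shows "prob {\<omega> \<in> space M. r \<le> Nmax X n \<omega>}
           \<le> exp 2 * (12 * (real n * p powr (1 / real CARD('d))))
              * exp (- r / real (near_bound k CARD('d)))"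
proof -
  let ?\<tau> = "12 * (real n * p powr (1 / real CARD('d)))"
  let ?c = "real (near_bound k CARD('d))"
  have \<tau>: "0 \<le> ?\<tau>" "?\<tau> \<le> exp (- 1)" "?\<tau> \<le> 1"
  proof -
    have "exp (- 1) \<le> (1::real)" by simp
    then show "0 \<le> ?\<tau>" "?\<tau> \<le> exp (- 1)" "?\<tau> \<le> 1" using assms(2) by (simp, linarith+)
  qed
  have "0 < 1 / real n" "1 / real n \<le> 1" using assms(1) by auto
  then obtain j where j: "r / ?c \<le> real (Suc j)"
    and P: "prob {\<omega> \<in> space M. r \<le> Nmax X n \<omega>}
              \<le> exp (1 / real n * real n) * ((12 / (1 / real n)) ^ CARD('d) * p) ^ Suc j"
    using prob_Nmax_ge_le_exp[of "1 / real n" r n] assms(3) by blast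
  have "(12 / (1 / real n)) ^ CARD('d) * p
      = (12 * real n) ^ CARD('d) * (p powr (1 / real CARD('d))) ^ CARD('d)"
    by (simp add: powr_card_power)
  also have "\<dots> = ?\<tau> ^ CARD('d)"
    by (simp only: power_mult_distrib[symmetric] mult.assoc)
  also have "\<dots> \<le> ?\<tau>"
    using \<tau> card_ge_1 power_decreasing[of 1 "CARD('d)" ?\<tau>] by simp
  finally have base: "(12 / (1 / real n)) ^ CARD('d) * p \<le> ?\<tau>" .
  have "((12 / (1 / real n)) ^ CARD('d) * p) ^ Suc j \<le> ?\<tau> ^ Suc j"
    using base p_nonneg by (intro power_mono) auto
  also have "\<dots> \<le> ?\<tau> * exp (- 1) ^ j"
    unfolding power_Suc using \<tau> by (intro mult_left_mono power_mono) auto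
  also have "\<dots> = ?\<tau> * exp (- real j)" by (simp add: exp_of_nat_mult[symmetric])
  also have "\<dots> \<le> ?\<tau> * exp (1 - r / ?c)" using j \<tau> by (intro mult_left_mono) auto
  finally have B: "((12 / (1 / real n)) ^ CARD('d) * p) ^ Suc j \<le> ?\<tau> * exp (1 - r / ?c)" .
  have "prob {\<omega> \<in> space M. r \<le> Nmax X n \<omega>} \<le> exp 1 * (?\<tau> * exp (1 - r / ?c))"
    using order_trans[OF P mult_left_mono[OF B exp_ge_zero]] assms(1) by simp
  also have "\<dots> = exp 2 * ?\<tau> * exp (- r / ?c)"
    by (simp add: exp_diff exp_minus field_simps flip: exp_add)
  finally show ?thesis .
qed

lemma Nmax_eq_sum_indicator:
  assumes "\<omega> \<in> space M"
  shows "Nmax X n \<omega> = (\<Sum>m=1..n. indicator {\<omega> \<in> space M. real m \<le> Nmax X n \<omega>} \<omega>)"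
proof -
  obtain \<gamma> where "Nmax X n \<omega> = real (card {e \<in> path_edges \<gamma>. X e \<omega>})"
    using Nmax_attained[of n X \<omega>] by blast
  then obtain K where K: "Nmax X n \<omega> = real K" by blast
  then have "K \<le> n" using Nmax_le[of X n \<omega>] by simp
  have "(\<Sum>m=1..n. indicator {\<omega> \<in> space M. real m \<le> Nmax X n \<omega>} \<omega>)
      = (\<Sum>m=1..n. of_bool (m \<le> K) :: real)"
    using assms K by (intro sum.cong) (auto simp: indicator_def)
  also have "\<dots> = real (card ({1..n} \<inter> {m. m \<le> K}))" by simp
  also have "{1..n} \<inter> {m. m \<le> K} = {1..K}" using \<open>K \<le> n\<close> by auto
  finally show ?thesis using K by simp
qed

lemma expectation_Nmax_eq_sum_prob:
  "expectation (Nmax X n) = (\<Sum>m=1..n. prob {\<omega> \<in> space M. real m \<le> Nmax X n \<omega>})"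
proof -
  have "expectation (Nmax X n)
      = expectation (\<lambda>\<omega>. \<Sum>m=1..n. indicator {\<omega> \<in> space M. real m \<le> Nmax X n \<omega>} \<omega>)"
    by (intro Bochner_Integration.integral_cong refl Nmax_eq_sum_indicator)
  also have "\<dots> = (\<Sum>m=1..n. expectation (indicator {\<omega> \<in> space M. real m \<le> Nmax X n \<omega>}))"
    by (intro Bochner_Integration.integral_sum integrable_real_indicator sets_Nmax_ge)
      (simp add: less_top[symmetric])
  also have "\<dots> = (\<Sum>m=1..n. prob {\<omega> \<in> space M. real m \<le> Nmax X n \<omega>})"
    by (intro sum.cong refl) (simp add: Int_absorb2)
  finally show ?thesis .
qed

lemma expectation_Nmax_le: "expectation (Nmax X n) \<le> real n"
  using sum_mono[of "{1..n}" "\<lambda>m. prob {\<omega> \<in> space M. real m \<le> Nmax X n \<omega>}" "\<lambda>_. 1"]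
  by (simp add: expectation_Nmax_eq_sum_prob)

lemma expectation_Nmax_le_small:
  assumes "n \<ge> 1" "12 * (real n * p powr (1 / real CARD('d))) \<le> exp (- 1)"
  shows "expectation (Nmax X n)
           \<le> lambda0 * exp_series_bound (real (near_bound k CARD('d)))
              * (real n * p powr (1 / real CARD('d)))"
proof -
  let ?c = "real (near_bound k CARD('d))"
  let ?t = "real n * p powr (1 / real CARD('d))"
  have "0 < ?c" using near_bound_ge_1[of k "CARD('d)"] by linarith
  have "expectation (Nmax X n) \<le> (\<Sum>m=1..n. exp 2 * (12 * ?t) * exp (- real m / ?c))"
    unfolding expectation_Nmax_eq_sum_prob
    using prob_Nmax_ge_le_exp_small[OF assms] by (intro sum_mono) auto
  also have "\<dots> = exp 2 * (12 * ?t) * (\<Sum>m=1..n. exp (- real m / ?c))"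
    by (simp add: sum_distrib_left)
  also have "\<dots> \<le> exp 2 * (12 * ?t) * exp_series_bound ?c"
    using sum_exp_le_exp_series_bound[OF \<open>0 < ?c\<close>] by (intro mult_left_mono) auto
  finally show ?thesis by (simp add: lambda0_def mult_ac)
qed

lemma expectation_Nmax_le_large:
  assumes "0 < p" "lambda0 * p powr (1 / real CARD('d)) \<le> 1"
  shows "expectation (Nmax X n)
           \<le> real (near_bound k CARD('d)) * lambda0 * p powr (1 / real CARD('d)) * real n
             + exp_series_bound (real (near_bound k CARD('d)))"
proof -
  let ?c = "real (near_bound k CARD('d))"
  define R where "R = ?c * lambda0 * p powr (1 / real CARD('d)) * real n"
  have "0 < ?c" using near_bound_ge_1[of k "CARD('d)"] by linarith
  have "R \<ge> 0" unfolding R_def using \<open>0 < ?c\<close> lambda0_ge_1 by simp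
  have "prob {\<omega> \<in> space M. real m \<le> Nmax X n \<omega>} \<le> of_bool (real m < R) + exp (- real m / ?c)"
    if "m \<in> {1..n}" for m
  proof (cases "real m < R")
    case False
    then show ?thesis
      using prob_Nmax_ge_le_exp_large[OF assms, of "real m" n] that by (simp add: R_def)
  qed (simp add: add_increasing2)
  then have "expectation (Nmax X n) \<le> (\<Sum>m=1..n. of_bool (real m < R) + exp (- real m / ?c))"
    unfolding expectation_Nmax_eq_sum_prob by (rule sum_mono)
  also have "\<dots> \<le> R + exp_series_bound ?c"
    unfolding sum.distrib
    by (intro add_mono sum_of_bool_less_le sum_exp_le_exp_series_bound \<open>R \<ge> 0\<close> \<open>0 < ?c\<close>)
  finally show ?thesis unfolding R_def .
qed

lemma expectation_Nmax_bound:
  "expectation (Nmax X n)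
     \<le> mean_const (real (near_bound k CARD('d))) * p powr (1 / real CARD('d)) * real n"
proof -
  let ?c = "real (near_bound k CARD('d))"
  let ?q = "p powr (1 / real CARD('d))"
  let ?G = "exp_series_bound ?c"
  have c: "?c \<ge> 1" by (rule near_bound_ge_1)
  then have G: "0 < ?G" by (intro exp_series_bound_pos) simp
  note C = mean_const_bounds[OF c]
  consider "n = 0 \<or> 1 < lambda0 * ?q" | "n \<ge> 1" "12 * (real n * ?q) \<le> exp (- 1)"
    | "n \<ge> 1" "lambda0 * ?q \<le> 1" "exp (- 1) < 12 * (real n * ?q)"
    by linarith
  then show ?thesis
  proof cases
    case 1
    then have "real n \<le> lambda0 * ?q * real n"
      using mult_right_mono[of 1 "lambda0 * ?q" "real n"] by auto
    also have "\<dots> \<le> mean_const ?c * ?q * real n" using C(1) by (intro mult_right_mono) auto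
    finally show ?thesis using expectation_Nmax_le[of n] by linarith
  next
    case 2
    then have "expectation (Nmax X n) \<le> lambda0 * ?G * (real n * ?q)"
      by (rule expectation_Nmax_le_small)
    also have "\<dots> \<le> mean_const ?c * (real n * ?q)" using C(2) by (intro mult_right_mono) auto
    finally show ?thesis by (simp add: mult_ac)
  next
    case 3
    then have "0 < p" using p_nonneg by (cases "p = 0") auto
    have "1 \<le> 12 * exp 1 * (real n * ?q)"
      using 3(3) by (simp add: exp_minus field_simps)
    also have "\<dots> \<le> lambda0 * (real n * ?q)"
      unfolding lambda0_def by (intro mult_right_mono) auto
    finally have "?G \<le> lambda0 * ?G * (real n * ?q)" using G by simp
    then have "expectation (Nmax X n) \<le> (?c * lambda0 + lambda0 * ?G) * (real n * ?q)"
      using expectation_Nmax_le_large[OF \<open>0 < p\<close> 3(2), of n] by (simp add: algebra_simps)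
    also have "\<dots> \<le> mean_const ?c * (real n * ?q)" using C(3) by (intro mult_right_mono) auto
    finally show ?thesis by (simp add: mult_ac)
  qed
qed

definition sup_ratio :: "('d edge \<Rightarrow> bool) \<Rightarrow> real" where
  "sup_ratio \<omega> = (SUP n\<in>{nat \<lceil>p powr (- 2 / real CARD('d))\<rceil>..}. Nmax X n \<omega> / real n)"

lemma start_index_ge_1:
  assumes "0 < p" shows "nat \<lceil>p powr (- 2 / real CARD('d))\<rceil> \<ge> 1"
proof -
  have "1 \<le> p powr (- 2 / real CARD('d))"
    using one_le_powr_neg[OF assms p_le_1, of "2 / real CARD('d)"] by simp
  then show ?thesis by linarith
qed

lemma Nmax_ratio_le_1: "n \<ge> 1 \<Longrightarrow> Nmax X n \<omega> / real n \<le> 1"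
  using Nmax_le[of X n \<omega>] by simp

lemma Nmax_ratio_le_1_beyond_start:
  assumes "0 < p" "n \<in> {nat \<lceil>p powr (- 2 / real CARD('d))\<rceil>..}"
  shows "Nmax X n \<omega> / real n \<le> 1"
proof (rule Nmax_ratio_le_1)
  show "1 \<le> n" using order_trans[OF start_index_ge_1[OF assms(1)]] assms(2) unfolding atLeast_iff .
qed

lemma bdd_above_Nmax_ratio:
  assumes "0 < p"
  shows "bdd_above ((\<lambda>n. Nmax X n \<omega> / real n) ` {nat \<lceil>p powr (- 2 / real CARD('d))\<rceil>..})"
  using Nmax_ratio_le_1_beyond_start[OF assms] by (intro bdd_aboveI2) blast

lemma sup_ratio_le_1: "0 < p \<Longrightarrow> sup_ratio \<omega> \<le> 1"
  unfolding sup_ratio_def using Nmax_ratio_le_1_beyond_start by (intro cSUP_least) auto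

lemma sup_ratio_nonneg:
  assumes "0 < p" shows "0 \<le> sup_ratio \<omega>"
proof -
  let ?n0 = "nat \<lceil>p powr (- 2 / real CARD('d))\<rceil>"
  have "0 \<le> Nmax X ?n0 \<omega> / real ?n0"
    using Nmax_nonneg[of X ?n0 \<omega>] by (rule divide_nonneg_nonneg) (rule of_nat_0_le_iff)
  also have "\<dots> \<le> sup_ratio \<omega>"
    unfolding sup_ratio_def by (intro cSUP_upper bdd_above_Nmax_ratio assms) simp
  finally show ?thesis .
qed

lemma borel_measurable_sup_ratio[measurable]: "0 < p \<Longrightarrow> sup_ratio \<in> borel_measurable M"
  unfolding sup_ratio_def[abs_def]
  by (intro borel_measurable_cSUP bdd_above_Nmax_ratio) (auto intro: countableI_type)

lemma sup_ratio_gt_imp_Nmax_ge: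
  assumes "0 < p" "a < sup_ratio \<omega>"
  obtains n where "n \<ge> nat \<lceil>p powr (- 2 / real CARD('d))\<rceil>" "a * real n \<le> Nmax X n \<omega>"
proof -
  obtain n where n: "n \<ge> nat \<lceil>p powr (- 2 / real CARD('d))\<rceil>" "a < Nmax X n \<omega> / real n"
    using assms(2) less_cSUP_iff[OF _ bdd_above_Nmax_ratio[OF assms(1)]]
    unfolding sup_ratio_def by auto
  moreover have "n \<ge> 1" using n(1) start_index_ge_1[OF assms(1)] by linarith
  ultimately show ?thesis using that by (simp add: field_simps)
qed

lemma prob_Nmax_ge_mult_le:
  assumes "0 < p" "lambda0 * p powr (1 / real CARD('d)) \<le> 1"
    and a: "real (near_bound k CARD('d)) * lambda0 * p powr (1 / real CARD('d)) \<le> a"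
    and "n \<ge> 1"
  shows "prob {\<omega> \<in> space M. a * real n \<le> Nmax X n \<omega>}
           \<le> exp (- a / real (near_bound k CARD('d))) ^ n"
proof -
  have "0 < real (near_bound k CARD('d)) * lambda0 * p powr (1 / real CARD('d))"
    using near_bound_ge_1[of k "CARD('d)"] assms(1) lambda0_ge_1 by simp
  then have "0 < a * real n"
    "real (near_bound k CARD('d)) * lambda0 * p powr (1 / real CARD('d)) * real n \<le> a * real n"
    using a \<open>n \<ge> 1\<close> mult_right_mono[OF a] by simp_all
  then have "prob {\<omega> \<in> space M. a * real n \<le> Nmax X n \<omega>}
      \<le> exp (real n * (- a / real (near_bound k CARD('d))))"
    using prob_Nmax_ge_le_exp_large[OF assms(1,2)] by (simp add: mult.commute)
  then show ?thesis by (simp only: exp_of_nat_mult)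
qed

lemma prob_sup_ratio_gt_le:
  assumes "0 < p" "lambda0 * p powr (1 / real CARD('d)) \<le> 1"
    and a: "real (near_bound k CARD('d)) * lambda0 * p powr (1 / real CARD('d)) \<le> a"
  shows "prob {\<omega> \<in> space M. a < sup_ratio \<omega>}
           \<le> exp (- a / real (near_bound k CARD('d))) ^ nat \<lceil>p powr (- 2 / real CARD('d))\<rceil>
             / (1 - exp (- a / real (near_bound k CARD('d))))"
proof -
  let ?c = "real (near_bound k CARD('d))"
  let ?n0 = "nat \<lceil>p powr (- 2 / real CARD('d))\<rceil>"
  define b where "b = exp (- a / ?c)"
  define A where "A i = {\<omega> \<in> space M. a * real (?n0 + i) \<le> Nmax X (?n0 + i) \<omega>}" for i
  have "?c \<ge> 1" by (rule near_bound_ge_1)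
  then have "0 < ?c * lambda0 * p powr (1 / real CARD('d))" using assms(1) lambda0_ge_1 by simp
  then have b: "0 < b" "b < 1" unfolding b_def using a \<open>?c \<ge> 1\<close> by auto
  have events: "A i \<in> events" for i unfolding A_def by (rule sets_Nmax_ge)
  have inclusion: "{\<omega> \<in> space M. a < sup_ratio \<omega>} \<subseteq> (\<Union>i. A i)"
  proof
    fix \<omega> assume \<omega>: "\<omega> \<in> {\<omega> \<in> space M. a < sup_ratio \<omega>}"
    then obtain n where "n \<ge> ?n0" "a * real n \<le> Nmax X n \<omega>"
      using sup_ratio_gt_imp_Nmax_ge[OF assms(1)] by blast
    then have "\<omega> \<in> A (n - ?n0)" using \<omega> by (simp add: A_def)
    then show "\<omega> \<in> (\<Union>i. A i)" by blast
  qed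
  have sets: "(\<Union>i. A i) \<in> events" using events by (intro sets.countable_UN) auto
  have prob_A: "prob (A i) \<le> b ^ ?n0 * b ^ i" for i
  proof -
    have "1 \<le> ?n0 + i" using start_index_ge_1[OF assms(1)] by simp
    from prob_Nmax_ge_mult_le[OF assms this] show ?thesis
      unfolding A_def b_def by (simp only: power_add)
  qed
  have summable: "summable (\<lambda>i. b ^ ?n0 * b ^ i)"
    using b by (intro summable_mult summable_geometric) simp
  then have summable_A: "summable (\<lambda>i. prob (A i))"
    by (rule summable_comparison_test[rotated]) (use prob_A in auto)
  have "prob {\<omega> \<in> space M. a < sup_ratio \<omega>} \<le> prob (\<Union>i. A i)"
    using inclusion sets by (rule finite_measure_mono)
  also have "\<dots> \<le> (\<Sum>i. prob (A i))"
    using events summable_A by (intro finite_measure_subadditive_countably) auto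
  also have "\<dots> \<le> (\<Sum>i. b ^ ?n0 * b ^ i)"
    using prob_A summable_A summable by (intro suminf_le) auto
  also have "\<dots> = b ^ ?n0 / (1 - b)" using b by (simp add: suminf_mult suminf_geometric)
  finally show ?thesis unfolding b_def .
qed

lemma prob_sup_ratio_gt_le_powr:
  assumes "0 < p" "lambda0 * p powr (1 / real CARD('d)) \<le> 1"
    and "real (near_bound k CARD('d)) * lambda0 \<le> s"
  shows "prob {\<omega> \<in> space M. s * p powr (1 / real CARD('d)) < sup_ratio \<omega>}
    \<le> exp (- s * p powr (- 1 / real CARD('d)) / real (near_bound k CARD('d)))
      * (1 + real (near_bound k CARD('d)) * p powr (- 1 / real CARD('d)))"
proof -
  let ?c = "real (near_bound k CARD('d))"
  let ?q = "p powr (1 / real CARD('d))"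
  let ?u = "p powr (- 1 / real CARD('d))"
  let ?n0 = "nat \<lceil>p powr (- 2 / real CARD('d))\<rceil>"
  let ?b = "exp (- (s * ?q) / ?c)"
  have c: "?c \<ge> 1" by (rule near_bound_ge_1)
  have "0 < ?q" using assms(1) by simp
  have "1 \<le> s" using one_le_near_bound_lambda0 assms(3) by (rule order_trans)
  have qu: "?q * ?u = 1" "?q * p powr (- 2 / real CARD('d)) = ?u"
    using assms(1) by (simp_all add: powr_add[symmetric] diff_divide_distrib[symmetric])
  have "prob {\<omega> \<in> space M. s * ?q < sup_ratio \<omega>} \<le> ?b ^ ?n0 / (1 - ?b)"
    using \<open>0 < ?q\<close> assms by (intro prob_sup_ratio_gt_le) (auto intro: mult_right_mono)
  also have "\<dots> = ?b ^ ?n0 * (1 / (1 - ?b))" by simp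
  also have "\<dots> \<le> exp (- s * ?u / ?c) * (1 + ?c * ?u)"
  proof (rule mult_mono)
    have "?q * p powr (- 2 / real CARD('d)) \<le> ?q * real ?n0"
      using \<open>0 < ?q\<close> by (intro mult_left_mono real_nat_ceiling_ge) simp
    then have "s * ?u \<le> s * (?q * real ?n0)"
      unfolding qu(2) using \<open>1 \<le> s\<close> by (intro mult_left_mono) simp_all
    then have "s * ?u \<le> s * ?q * real ?n0" by (simp only: mult.assoc)
    then have "?b ^ ?n0 \<le> exp (- s * ?u / ?c)"
      using c by (simp add: exp_of_nat_mult[symmetric] divide_right_mono mult.commute)
    then show "?b ^ ?n0 \<le> exp (- s * ?u / ?c)" .
    have "1 / (1 - ?b) \<le> 1 + 1 / (s * ?q / ?c)"
      using inverse_one_minus_exp_le[of "s * ?q / ?c"] \<open>1 \<le> s\<close> \<open>0 < ?q\<close> c by simp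
    also have "1 / (s * ?q / ?c) = ?c * ?u / s"
      using qu(1) \<open>1 \<le> s\<close> \<open>0 < ?q\<close> by (simp add: field_simps)
    also have "\<dots> \<le> ?c * ?u"
    proof (rule mult_imp_div_pos_le)
      have "0 \<le> ?c * ?u" by simp
      then show "?c * ?u \<le> ?c * ?u * s" using mult_left_mono[OF \<open>1 \<le> s\<close>] by fastforce
    qed (use \<open>1 \<le> s\<close> in simp)
    finally show "1 / (1 - ?b) \<le> 1 + ?c * ?u" by simp
  qed (use \<open>1 \<le> s\<close> \<open>0 < ?q\<close> c in auto)
  finally show ?thesis .
qed

lemma prob_sup_ratio_gt_le_exp:
  assumes "0 < p" "real (near_bound k CARD('d)) * lambda0 < s"
  shows "prob {\<omega> \<in> space M. s * p powr (1 / real CARD('d)) < sup_ratio \<omega>}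
           \<le> 2 * real (near_bound k CARD('d)) ^ 2
              * exp (- (1 / (2 * real (near_bound k CARD('d)))) * s)"
proof (cases "lambda0 * p powr (1 / real CARD('d)) \<le> 1")
  case True
  have "1 \<le> s" using one_le_near_bound_lambda0 assms(2) by (rule order_trans[OF _ less_imp_le])
  moreover have "1 \<le> p powr (- 1 / real CARD('d))"
    using one_le_powr_neg[OF assms(1) p_le_1, of "1 / real CARD('d)"] by simp
  ultimately show ?thesis
    using prob_sup_ratio_gt_le_powr[OF assms(1) True less_imp_le[OF assms(2)]]
      exp_affine_prefactor_le[OF near_bound_ge_1, of s "p powr (- 1 / real CARD('d))" k "CARD('d)"]
    by linarith
next
  case False
  have "1 * lambda0 \<le> real (near_bound k CARD('d)) * lambda0"
    using lambda0_ge_1 by (intro mult_right_mono near_bound_ge_1) simp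
  then have "lambda0 \<le> s" using assms(2) by simp
  then have "1 < s * p powr (1 / real CARD('d))"
    using False mult_right_mono[of lambda0 s "p powr (1 / real CARD('d))"] by simp
  then have empty: "{\<omega> \<in> space M. s * p powr (1 / real CARD('d)) < sup_ratio \<omega>} = {}"
    using sup_ratio_le_1[OF assms(1)] by (auto simp: not_less intro: order_trans less_imp_le)
  show ?thesis unfolding empty by simp
qed

lemma expectation_sup_ratio_le:
  assumes "0 < p"
  shows "expectation sup_ratio
           \<le> mean_const (real (near_bound k CARD('d))) * p powr (1 / real CARD('d))"
proof -
  let ?c = "real (near_bound k CARD('d))"
  let ?q = "p powr (1 / real CARD('d))"
  let ?u = "p powr (- 1 / real CARD('d))"
  have c: "?c \<ge> 1" by (rule near_bound_ge_1)
  have "0 < ?q" using assms by simp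
  show ?thesis
  proof (cases "lambda0 * ?q \<le> 1")
    case False
    have "integrable M sup_ratio"
      using sup_ratio_nonneg[OF assms] sup_ratio_le_1[OF assms] borel_measurable_sup_ratio[OF assms]
      by (intro integrable_const_bound[where B = 1]) auto
    then have "expectation sup_ratio \<le> expectation (\<lambda>_. 1)"
      using sup_ratio_le_1[OF assms] by (intro integral_mono) auto
    also have "\<dots> \<le> lambda0 * ?q" using False by (simp add: prob_space)
    also have "\<dots> \<le> mean_const ?c * ?q"
      using mean_const_bounds(1)[OF c] \<open>0 < ?q\<close> by (intro mult_right_mono) auto
    finally show ?thesis .
  next
    case True
    define a where "a = ?c * lambda0 * ?q"
    have "0 \<le> a" unfolding a_def using c lambda0_ge_1 by simp
    then have "expectation sup_ratio \<le> a + prob {\<omega> \<in> space M. a < sup_ratio \<omega>}"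
      using sup_ratio_nonneg[OF assms] sup_ratio_le_1[OF assms] borel_measurable_sup_ratio[OF assms]
      by (intro expectation_le_add_prob_gt)
    also have "prob {\<omega> \<in> space M. a < sup_ratio \<omega>}
        \<le> exp (- (?c * lambda0) * ?u / ?c) * (1 + ?c * ?u)"
      using prob_sup_ratio_gt_le_powr[OF assms True, of "?c * lambda0"] by (simp add: a_def)
    also have "\<dots> = exp (- lambda0 * ?u) * (1 + ?c * ?u)" using c by simp
    also have "\<dots> \<le> 4 * (1 + ?c) / ?u"
      using one_le_powr_neg[OF assms p_le_1, of "1 / real CARD('d)"] c lambda0_ge_1
      by (intro exp_affine_prefactor_le_inverse) auto
    also have "a + 4 * (1 + ?c) / ?u = (?c * lambda0 + 4 * (1 + ?c)) * ?q"
      using assms by (simp add: a_def powr_minus_divide algebra_simps)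
    also have "\<dots> \<le> mean_const ?c * ?q"
      using mean_const_bounds(4)[OF c] \<open>0 < ?q\<close> by (intro mult_right_mono) auto
    finally show ?thesis by simp
  qed
qed

end

theorem lemmaB1:
  fixes k :: nat
  assumes "CARD('d::finite) \<ge> 2"
  shows "\<exists>C1 C2 C3 C4 :: real. C1 > 0 \<and> C2 > 0 \<and> C3 > 0 \<and> C4 > 0 \<and>
    (\<forall>(M :: ('d edge \<Rightarrow> bool) measure) (X :: 'd edge \<Rightarrow> ('d edge \<Rightarrow> bool) \<Rightarrow> bool) (p :: real).
      prob_space M \<and> 0 \<le> p \<and> p \<le> 1 \<and>
      (\<forall>e\<in>nn_edges. X e \<in> measurable M (count_space UNIV)) \<and>
      (\<forall>e\<in>nn_edges. measure M {\<omega> \<in> space M. X e \<omega>} = p) \<and>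
      (\<forall>e\<in>nn_edges. prob_space.indep_set M
          {X e -` A \<inter> space M | A. A \<in> sets (count_space UNIV)}
          {(\<lambda>\<omega>. \<lambda>e'\<in>far_edges k e. X e' \<omega>) -` A \<inter> space M | A.
             A \<in> sets (PiM (far_edges k e) (\<lambda>_. count_space UNIV))})
      \<longrightarrow>
      (\<forall>n. prob_space.expectation M (Nmax X n) \<le> C1 * p powr (1 / CARD('d)) * real n) \<and>
      (0 < p \<longrightarrow>
        prob_space.expectation M
          (\<lambda>\<omega>. SUP n\<in>{nat \<lceil>p powr (- 2 / CARD('d))\<rceil>..}. Nmax X n \<omega> / real n)
        \<le> C1 * p powr (1 / CARD('d))) \<and>
      (0 < p \<and> p < 1 \<longrightarrow> (\<forall>s > C2.
        measure M {\<omega> \<in> space M.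
          (SUP n\<in>{nat \<lceil>p powr (- 2 / CARD('d))\<rceil>..}. Nmax X n \<omega> / real n) > s * p powr (1 / CARD('d))}
        \<le> C3 * exp (- C4 * s))))"
proof -
  define c where "c = real (near_bound k CARD('d))"
  have "c \<ge> 1" unfolding c_def by (rule near_bound_ge_1)
  then have pos: "0 < mean_const c" "0 < c * lambda0" "0 < 2 * c ^ 2" "0 < 1 / (2 * c)"
    using mean_const_bounds(1)[of c] lambda0_ge_1 by auto
  note percolation_iff = finite_range_percolation_def finite_range_percolation_axioms_def
  show ?thesis
    apply (rule exI[of _ "mean_const c"], rule exI[of _ "c * lambda0"], rule exI[of _ "2 * c ^ 2"],
        rule exI[of _ "1 / (2 * c)"])
    apply (intro conjI pos allI impI)
    subgoal premises H for M X p n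
    proof -
      interpret finite_range_percolation M X p k using H unfolding percolation_iff by blast
      show ?thesis using expectation_Nmax_bound unfolding c_def .
    qed
    subgoal premises H for M X p
    proof -
      interpret finite_range_percolation M X p k using H(1) unfolding percolation_iff by blast
      show ?thesis using expectation_sup_ratio_le[OF H(2)] unfolding sup_ratio_def[abs_def] c_def .
    qed
    subgoal premises H for M X p s
    proof -
      interpret finite_range_percolation M X p k using H(1) unfolding percolation_iff by blast
      show ?thesis using prob_sup_ratio_gt_le_exp[of s] H(2,3) unfolding sup_ratio_def c_def by simp
    qed
    done
qed

end
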